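(* Let $\epsilon>0$. Then $\hat\Psi(u)\neq\emptyset$ for every $u\in\mathbb{R}^k$ if and only if $\epsilon\in(0,\tfrac{1}{2k}]$.
   Context: $[k]=\{1,\dots,k\}$, $\mathcal{Y}=\{-1,1\}^k$, $\mathcal{V}=\{-1,0,1\}^k$. $u\odot u'$ entrywise product, $|u|$ entrywise absolute value, $\mathbbm{1}$ all-ones; $\boxed{u}=\mathrm{sign}(u)\odot\min(|u|,\mathbbm{1})$. For $A\subseteq\mathbb{R}^k$, $d_\infty(A,u)=\inf_{a\in A}\|a-u\|_\infty$. For a permutation $\pi$ of $[k]$ and $i\in\{0,\dots,k\}$, $\mathbbm{1}_{\pi,i}$ is the indicator vector of $\{\pi_1,\dots,\pi_i\}$; $V_{\pi,y}=\{\mathbbm{1}_{\pi,i}\odot y: i=0,\dots,k\}$; $\mathcal{V}^{\text{face}}=\bigcup_{\pi,y\in\mathcal{Y}}2^{V_{\pi,y}}$; $\hat\Psi(u)=\bigcap\{V\in\mathcal{V}^{\text{face}}:d_\infty(\mathrm{conv}\,V,\boxed{u})<\epsilon\}$. *)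

theory Defs
  imports "HOL-Analysis.Analysis"
begin

text \<open>Vectors in R^k are modelled as real^'k, with k = CARD('k).
  A permutation pi of [k] is a bijection from {1..k} onto the index type.\<close>

definition linf :: "real^'k \<Rightarrow> real" where
  "linf v = Max (range (\<lambda>j. \<bar>v $ j\<bar>))"

text \<open>d_infty(A,u) = inf over a in A of the sup-norm distance; taken in ereal so
  that the infimum over the empty set is +infinity.\<close>
definition dinf :: "(real^'k) set \<Rightarrow> real^'k \<Rightarrow> ereal" where
  "dinf A u = Inf ((\<lambda>a. ereal (linf (a - u))) ` A)"

definition boxed :: "real^'k \<Rightarrow> real^'k" where
  "boxed u = (\<chi> j. sgn (u $ j) * min \<bar>u $ j\<bar> 1)"

definition is_perm :: "(nat \<Rightarrow> 'k::finite) \<Rightarrow> bool" where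
  "is_perm \<pi> \<longleftrightarrow> bij_betw \<pi> {1..CARD('k)} (UNIV :: 'k set)"

definition ind_perm :: "(nat \<Rightarrow> 'k::finite) \<Rightarrow> nat \<Rightarrow> real^'k" where
  "ind_perm \<pi> i = (\<chi> j. if j \<in> \<pi> ` {1..i} then 1 else 0)"

definition signvecs :: "(real^'k::finite) set" where
  "signvecs = {y. \<forall>j. y $ j \<in> {-1, 1}}"

definition Vpy :: "(nat \<Rightarrow> 'k::finite) \<Rightarrow> real^'k \<Rightarrow> (real^'k) set" where
  "Vpy \<pi> y = {ind_perm \<pi> i * y | i. i \<le> CARD('k)}"

definition Vface :: "(real^'k::finite) set set" where
  "Vface = (\<Union>\<pi>\<in>{\<pi>. is_perm \<pi>}. \<Union>y\<in>signvecs. Pow (Vpy \<pi> y))"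

definition psi_hat :: "real \<Rightarrow> real^'k::finite \<Rightarrow> (real^'k) set" where
  "psi_hat \<epsilon> u = \<Inter> {V \<in> Vface. dinf (convex hull V) (boxed u) < ereal \<epsilon>}"

end

theory Submission
  imports Defs
begin

(* Write v = boxed u and k = CARD('k).
   If \<epsilon> <= 1/(2k), a pigeonhole argument gives a level c in [0,1] at distance at least \<epsilon>
   from every |v_j|; rounding v at c (sgn v_j where |v_j| > c, and 0 elsewhere) gives a common
   point of all admissible faces.  Along a chain V_{pi,y} the signed coordinates y_{pi p} x_{pi p}
   of a point x of conv V decrease in p, so a point \<epsilon>-close to v crosses the level c strictly
   between two consecutive positions m and m+1; such a drop forces 1_{pi,m} * y into V, and this
   vertex is exactly the rounding of v.
   If \<epsilon> > 1/(2k), let v_{pi p} = 1 - (2p - 1)/(2k), the midpoints of the staircase of V_{pi,1}.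
   Merging the two steps next to 1_{pi,i} gives a point of the face of V_{pi,1} without 1_{pi,i}
   at distance 1/(2k) from v, so Psi(v) lies in each of these k + 1 faces, which have empty
   intersection. *)

lemma exists_point_far_from_finite_set:
  fixes t :: "'a \<Rightarrow> real"
  assumes "finite J" "\<epsilon> > 0" "2 * \<epsilon> * real (card J) \<le> hi - lo"
  shows "\<exists>c. lo \<le> c \<and> c \<le> hi \<and> (\<forall>j\<in>J. \<epsilon> \<le> \<bar>t j - c\<bar>)"
proof -
  define n where "n = card J"
  \<comment> \<open>Each t j is within \<epsilon> of at most one of the n + 1 grid points, which are 2\<epsilon> apart.\<close>
  define grid where "grid i = lo + 2 * \<epsilon> * real i" for i :: nat
  define blocked where "blocked j = {i \<in> {0..n}. \<bar>t j - grid i\<bar> < \<epsilon>}" for j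
  have "card (blocked j) \<le> 1" for j
  proof -
    have "i = i'" if "i \<in> blocked j" "i' \<in> blocked j" for i i'
    proof -
      have "\<bar>grid i - grid i'\<bar> < 2 * \<epsilon>" using that by (simp add: blocked_def) linarith
      moreover have "grid i - grid i' = 2 * \<epsilon> * (real i - real i')"
        by (simp add: grid_def algebra_simps)
      ultimately have "2 * \<epsilon> * \<bar>real i - real i'\<bar> < 2 * \<epsilon> * 1"
        using \<open>\<epsilon> > 0\<close> by (simp add: abs_mult)
      then have "\<bar>real i - real i'\<bar> < 1" using \<open>\<epsilon> > 0\<close> by (simp only: mult_less_cancel_left_pos)
      then show ?thesis by linarith
    qed
    then show ?thesis by (simp add: card_le_Suc0_iff_eq blocked_def)
  qed
  then have "card (\<Union>j\<in>J. blocked j) < card {0..n}"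
    using card_UN_le[OF \<open>finite J\<close>, of blocked] sum_bounded_above[of J "\<lambda>j. card (blocked j)" 1]
    by (simp add: n_def)
  moreover have "finite (\<Union>j\<in>J. blocked j)" using \<open>finite J\<close> by (simp add: blocked_def)
  ultimately obtain i where i: "i \<in> {0..n}" "i \<notin> (\<Union>j\<in>J. blocked j)"
    by (meson card_mono not_le subsetI)
  have "0 \<le> 2 * \<epsilon> * real i" "2 * \<epsilon> * real i \<le> 2 * \<epsilon> * real n"
    using i(1) \<open>\<epsilon> > 0\<close> by simp_all
  then have "lo \<le> grid i \<and> grid i \<le> hi" using assms(3) unfolding grid_def n_def by linarith
  then show ?thesis using i by (auto simp: blocked_def not_less)
qed

lemma antimono_crosses_threshold:
  fixes s :: "nat \<Rightarrow> real"
  assumes "antimono s" "0 < n" "c \<le> s 0" "s (Suc n) \<le> c" "\<And>p. 1 \<le> p \<Longrightarrow> p \<le> n \<Longrightarrow> s p \<noteq> c"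
  obtains m where "m \<le> n" "s (Suc m) < s m" "\<And>p. 1 \<le> p \<Longrightarrow> p \<le> n \<Longrightarrow> c < s p \<longleftrightarrow> p \<le> m"
proof
  define P where "P = {p \<in> {1..n}. c < s p}"
  define m where "m = Max (insert 0 P)"
  have "finite P" by (simp add: P_def)
  show "m \<le> n" using \<open>finite P\<close> by (auto simp: m_def P_def)
  have m_cases: "m = 0 \<or> m \<in> P" using \<open>finite P\<close> Max_in[of "insert 0 P"] by (auto simp: m_def)
  show crossing: "c < s p \<longleftrightarrow> p \<le> m" if "1 \<le> p" "p \<le> n" for p
  proof
    assume "c < s p"
    then show "p \<le> m" using that \<open>finite P\<close> by (simp add: m_def P_def)
  next
    assume "p \<le> m"
    then have "m \<in> P" using m_cases that by auto
    then show "c < s p"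
      using antimonoD[OF \<open>antimono s\<close> \<open>p \<le> m\<close>] by (simp add: P_def)
  qed
  have "s (Suc m) < c" if "m < n"
    using crossing[of "Suc m"] assms(5)[of "Suc m"] that by fastforce
  then have "s (Suc m) < c \<or> m = n" using \<open>m \<le> n\<close> by linarith
  moreover have "c < s m \<or> m = 0" using m_cases by (auto simp: P_def)
  ultimately show "s (Suc m) < s m" using assms(2-4) by auto
qed

lemma nonneg_on_convex_hull_if_affine:
  fixes L :: "'a::real_vector \<Rightarrow> real"
  assumes "\<And>x x' a b. 0 \<le> a \<Longrightarrow> 0 \<le> b \<Longrightarrow> a + b = 1 \<Longrightarrow> L (a *\<^sub>R x + b *\<^sub>R x') = a * L x + b * L x'"
    and "\<forall>v\<in>V. 0 \<le> L v" and "x \<in> convex hull V"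
  shows "0 \<le> L x"
proof -
  have "convex {x. 0 \<le> L x}" unfolding convex_def using assms(1) by simp
  then have "convex hull V \<subseteq> {x. 0 \<le> L x}" using assms(2) by (intro hull_minimal) auto
  then show ?thesis using assms(3) by blast
qed

lemma linf_less_iff: "linf v < b \<longleftrightarrow> (\<forall>j. \<bar>v $ j\<bar> < b)"
  by (simp add: linf_def)

lemma linf_le_iff: "linf v \<le> b \<longleftrightarrow> (\<forall>j. \<bar>v $ j\<bar> \<le> b)"
  by (simp add: linf_def)

lemma dinf_less_ereal_iff: "dinf A u < ereal e \<longleftrightarrow> (\<exists>a\<in>A. \<forall>j. \<bar>a $ j - u $ j\<bar> < e)"
  by (simp add: dinf_def Inf_less_iff linf_less_iff)

lemma dinf_le_ereal:
  assumes "a \<in> A" "\<forall>j. \<bar>a $ j - u $ j\<bar> \<le> d"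
  shows "dinf A u \<le> ereal d"
proof -
  have "linf (a - u) \<le> d" using assms(2) by (simp add: linf_le_iff)
  then show ?thesis unfolding dinf_def using assms(1) by (auto intro: INF_lower2)
qed

lemma boxed_eq_self: "(\<forall>j. \<bar>u $ j\<bar> \<le> 1) \<Longrightarrow> boxed u = u"
  by (simp add: boxed_def vec_eq_iff sgn_mult_abs)

lemma mem_psi_hat_iff:
  "w \<in> psi_hat \<epsilon> u \<longleftrightarrow> (\<forall>V\<in>Vface. dinf (convex hull V) (boxed u) < ereal \<epsilon> \<longrightarrow> w \<in> V)"
  by (auto simp: psi_hat_def)

lemma mem_Vface_iff: "V \<in> Vface \<longleftrightarrow> (\<exists>\<pi> y. is_perm \<pi> \<and> y \<in> signvecs \<and> V \<subseteq> Vpy \<pi> y)"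
  by (auto simp: Vface_def)

lemma signvecs_nth: "y \<in> signvecs \<Longrightarrow> y $ j = 1 \<or> y $ j = -1"
  by (auto simp: signvecs_def)

lemma is_perm_exists: "\<exists>\<pi> :: nat \<Rightarrow> 'k::finite. is_perm \<pi>"
  using finite_same_card_bij[of "{1..CARD('k)}" "UNIV :: 'k set"] by (auto simp: is_perm_def)

lemma is_perm_surj:
  fixes \<pi> :: "nat \<Rightarrow> 'k::finite"
  assumes "is_perm \<pi>"
  obtains p where "1 \<le> p" "p \<le> CARD('k)" "\<pi> p = j"
  using assms unfolding is_perm_def bij_betw_def by (metis UNIV_I atLeastAtMost_iff imageE)

lemma is_perm_coordinates_exist:
  fixes \<pi> :: "nat \<Rightarrow> 'k::finite"
  assumes "is_perm \<pi>"
  shows "\<exists>x :: real^'k. \<forall>p\<in>{1..CARD('k)}. x $ \<pi> p = g p"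
proof
  show "\<forall>p\<in>{1..CARD('k)}. (\<chi> j. g (inv_into {1..CARD('k)} \<pi> j)) $ \<pi> p = g p"
    using assms by (simp add: is_perm_def bij_betw_def)
qed

lemma ind_perm_nth:
  fixes \<pi> :: "nat \<Rightarrow> 'k::finite"
  assumes "is_perm \<pi>" "1 \<le> p" "p \<le> CARD('k)"
  shows "ind_perm \<pi> i $ \<pi> p = (if p \<le> i then 1 else 0)"
proof -
  have "\<pi> p \<in> \<pi> ` {1..i} \<longleftrightarrow> p \<in> {1..i}"
  proof (cases "p \<le> i")
    case False
    then have "{1..i} \<subseteq> {1..CARD('k)}" using assms(3) by auto
    then show ?thesis
      using assms by (intro inj_on_image_mem_iff[of _ "{1..CARD('k)}"]) (auto simp: is_perm_def bij_betw_def)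
  qed (use assms in auto)
  then show ?thesis using assms(2) by (simp add: ind_perm_def)
qed

lemma ind_perm_inj_on:
  fixes \<pi> :: "nat \<Rightarrow> 'k::finite"
  assumes "is_perm \<pi>"
  shows "inj_on (ind_perm \<pi>) {..CARD('k)}"
proof (rule linorder_inj_onI)
  fix i i' assume "i < i'" "i' \<in> {..CARD('k)}"
  then have "ind_perm \<pi> i $ \<pi> i' \<noteq> ind_perm \<pi> i' $ \<pi> i'"
    using assms by (simp add: ind_perm_nth)
  then show "ind_perm \<pi> i \<noteq> ind_perm \<pi> i'" by metis
qed auto

definition chain_coord :: "(nat \<Rightarrow> 'k::finite) \<Rightarrow> real^'k \<Rightarrow> real^'k \<Rightarrow> nat \<Rightarrow> real" where
  "chain_coord \<pi> y x p = (if p = 0 then 1 else if p \<le> CARD('k) then y $ \<pi> p * x $ \<pi> p else 0)"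

lemma chain_coord_ind_perm:
  fixes \<pi> :: "nat \<Rightarrow> 'k::finite"
  assumes "is_perm \<pi>" "y \<in> signvecs" "i \<le> CARD('k)"
  shows "chain_coord \<pi> y (ind_perm \<pi> i * y) p = (if p \<le> i then 1 else 0)"
proof -
  have "y $ j * y $ j = 1" for j using signvecs_nth[OF assms(2), of j] by auto
  then show ?thesis using assms by (auto simp: chain_coord_def ind_perm_nth mult.left_commute)
qed

lemma chain_coord_le_on_convex_hull:
  assumes "x \<in> convex hull V" "\<forall>v\<in>V. chain_coord \<pi> y v q \<le> chain_coord \<pi> y v p"
  shows "chain_coord \<pi> y x q \<le> chain_coord \<pi> y x p"
proof -
  have "0 \<le> chain_coord \<pi> y x p - chain_coord \<pi> y x q"
    by (rule nonneg_on_convex_hull_if_affine[OF _ _ assms(1)])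
       (use assms(2) in \<open>auto simp: chain_coord_def algebra_simps\<close>)
  then show ?thesis by simp
qed

definition threshold_sign :: "real \<Rightarrow> real^'k \<Rightarrow> real^'k" where
  "threshold_sign c x = (\<chi> j. if c < \<bar>x $ j\<bar> then sgn (x $ j) else 0)"

context
  fixes \<pi> :: "nat \<Rightarrow> 'k::finite" and y :: "real^'k" and V :: "(real^'k) set" and x :: "real^'k"
  assumes perm: "is_perm \<pi>" and sign: "y \<in> signvecs" and face: "V \<subseteq> Vpy \<pi> y"
    and hull: "x \<in> convex hull V"
begin

lemma chain_coord_antimono: "antimono (chain_coord \<pi> y x)"
proof (rule antimonoI, rule chain_coord_le_on_convex_hull[OF hull], rule ballI)
  fix p q :: nat and v assume "p \<le> q" "v \<in> V"
  then show "chain_coord \<pi> y v q \<le> chain_coord \<pi> y v p"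
    using face perm sign by (auto simp: Vpy_def chain_coord_ind_perm)
qed

lemma ind_perm_mem_if_chain_coord_drops:
  assumes "chain_coord \<pi> y x (Suc m) < chain_coord \<pi> y x m"
  shows "ind_perm \<pi> m * y \<in> V"
proof (rule ccontr)
  assume "ind_perm \<pi> m * y \<notin> V"
  have "chain_coord \<pi> y v m \<le> chain_coord \<pi> y v (Suc m)" if "v \<in> V" for v
  proof -
    obtain i where "i \<le> CARD('k)" "v = ind_perm \<pi> i * y" using face \<open>v \<in> V\<close> by (auto simp: Vpy_def)
    moreover from this have "i \<noteq> m" using \<open>v \<in> V\<close> \<open>ind_perm \<pi> m * y \<notin> V\<close> by blast
    ultimately show ?thesis using perm sign by (simp add: chain_coord_ind_perm)
  qed
  then show False using chain_coord_le_on_convex_hull[OF hull] assms by (meson ballI not_le)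
qed

lemma chain_coord_eq_abs:
  assumes "1 \<le> p" "p \<le> CARD('k)"
  shows "chain_coord \<pi> y x p = \<bar>x $ \<pi> p\<bar>" and "y $ \<pi> p * x $ \<pi> p = \<bar>x $ \<pi> p\<bar>"
proof -
  have "0 \<le> chain_coord \<pi> y x p"
    using antimonoD[OF chain_coord_antimono, of p "Suc CARD('k)"] assms by (simp add: chain_coord_def)
  moreover have "y $ \<pi> p = 1 \<or> y $ \<pi> p = -1" by (rule signvecs_nth[OF sign])
  ultimately show "y $ \<pi> p * x $ \<pi> p = \<bar>x $ \<pi> p\<bar>" using assms by (auto simp: chain_coord_def)
  then show "chain_coord \<pi> y x p = \<bar>x $ \<pi> p\<bar>" using assms by (simp add: chain_coord_def)
qed

lemma threshold_sign_mem:
  assumes "0 \<le> c" "c \<le> 1" "\<forall>j. \<bar>x $ j\<bar> \<noteq> c"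
  shows "threshold_sign c x \<in> V"
proof -
  let ?s = "chain_coord \<pi> y x"
  obtain m where m: "m \<le> CARD('k)" "?s (Suc m) < ?s m"
    and crossing: "\<And>p. 1 \<le> p \<Longrightarrow> p \<le> CARD('k) \<Longrightarrow> c < ?s p \<longleftrightarrow> p \<le> m"
  proof (rule antimono_crosses_threshold[OF chain_coord_antimono])
    show "c \<le> ?s 0" "?s (Suc CARD('k)) \<le> c" using assms by (simp_all add: chain_coord_def)
    show "?s p \<noteq> c" if "1 \<le> p" "p \<le> CARD('k)" for p
      using assms(3) chain_coord_eq_abs(1)[OF that] by simp
  qed (simp, rule that)
  have "threshold_sign c x = ind_perm \<pi> m * y"
  proof (rule vec_eq_iff[THEN iffD2], rule allI)
    fix j
    obtain p where p: "1 \<le> p" "p \<le> CARD('k)" "\<pi> p = j" using is_perm_surj[OF perm] .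
    have "c < \<bar>x $ j\<bar> \<longleftrightarrow> p \<le> m" using crossing[OF p(1,2)] chain_coord_eq_abs(1)[OF p(1,2)] p(3) by simp
    moreover have "sgn (x $ j) = y $ j" if "c < \<bar>x $ j\<bar>"
    proof -
      have "y $ j * x $ j = \<bar>x $ j\<bar>" using chain_coord_eq_abs(2)[OF p(1,2)] p(3) by simp
      then show ?thesis using signvecs_nth[OF sign, of j] that assms(1) by (auto simp: sgn_if)
    qed
    moreover have "ind_perm \<pi> m $ j = (if p \<le> m then 1 else 0)" using ind_perm_nth[OF perm p(1,2)] p(3) by simp
    ultimately show "threshold_sign c x $ j = (ind_perm \<pi> m * y) $ j" by (simp add: threshold_sign_def)
  qed
  then show ?thesis using ind_perm_mem_if_chain_coord_drops[OF m(2)] by simp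
qed

end

lemma threshold_crossing_stable:
  fixes a v c :: real
  assumes "\<bar>a - v\<bar> < \<epsilon>" "\<epsilon> \<le> \<bar>\<bar>v\<bar> - c\<bar>" "0 \<le> c"
  shows "c < \<bar>a\<bar> \<longleftrightarrow> c < \<bar>v\<bar>" and "c < \<bar>v\<bar> \<Longrightarrow> sgn a = sgn v" and "\<bar>a\<bar> \<noteq> c"
  using assms by (auto simp: abs_if sgn_if split: if_splits)

lemma threshold_sign_eq_if_close:
  assumes "\<forall>j. \<bar>a $ j - v $ j\<bar> < \<epsilon>" "\<forall>j. \<epsilon> \<le> \<bar>\<bar>v $ j\<bar> - c\<bar>" "0 \<le> c"
  shows "threshold_sign c a = threshold_sign c v" and "\<forall>j. \<bar>a $ j\<bar> \<noteq> c"
proof -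
  note stable = threshold_crossing_stable[OF assms(1)[rule_format] assms(2)[rule_format] assms(3)]
  then show "threshold_sign c a = threshold_sign c v" and "\<forall>j. \<bar>a $ j\<bar> \<noteq> c"
    by (auto simp: threshold_sign_def vec_eq_iff)
qed

lemma psi_hat_nonempty:
  assumes "0 < \<epsilon>" "\<epsilon> \<le> 1 / (2 * real CARD('k))"
  shows "psi_hat \<epsilon> (u :: real^'k::finite) \<noteq> {}"
proof -
  have "2 * \<epsilon> * real (card (UNIV :: 'k set)) \<le> 1 - 0" using assms(2) by (simp add: field_simps)
  then obtain c where c: "0 \<le> c" "c \<le> 1" "\<forall>j. \<epsilon> \<le> \<bar>\<bar>boxed u $ j\<bar> - c\<bar>"
    using exists_point_far_from_finite_set[where J = UNIV and lo = 0 and hi = 1 and t = "\<lambda>j. \<bar>boxed u $ j\<bar>"]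
      assms(1) by auto
  have "threshold_sign c (boxed u) \<in> psi_hat \<epsilon> u"
    unfolding mem_psi_hat_iff
  proof (intro ballI impI)
    fix V assume "V \<in> Vface" "dinf (convex hull V) (boxed u) < ereal \<epsilon>"
    then obtain \<pi> y a where face: "is_perm \<pi>" "y \<in> signvecs" "V \<subseteq> Vpy \<pi> y"
      and a: "a \<in> convex hull V" "\<forall>j. \<bar>a $ j - boxed u $ j\<bar> < \<epsilon>"
      by (auto simp: mem_Vface_iff dinf_less_ereal_iff)
    note close = threshold_sign_eq_if_close[OF a(2) c(3) c(1)]
    show "threshold_sign c (boxed u) \<in> V"
      using threshold_sign_mem[OF face a(1) c(1,2) close(2)] close(1) by simp
  qed
  then show ?thesis by blast
qed

lemma staircase_mem_convex_hull_ind_perm: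
  fixes \<pi> :: "nat \<Rightarrow> 'k::finite" and f :: "nat \<Rightarrow> real"
  defines "k \<equiv> CARD('k)"
  assumes perm: "is_perm \<pi>" and f0: "f 0 = 1" and fk: "f (Suc k) = 0"
    and antitone: "\<And>i. i \<le> k \<Longrightarrow> f (Suc i) \<le> f i"
    and flat: "i0 \<le> k" "f (Suc i0) = f i0"
    and x: "\<forall>p\<in>{1..k}. x $ \<pi> p = f p"
  shows "x \<in> convex hull (ind_perm \<pi> ` ({..k} - {i0}))"
proof -
  define \<mu> where "\<mu> i = f i - f (Suc i)" for i
  define I where "I = {..k} - {i0}"
  have "\<mu> i0 = 0" using flat by (simp add: \<mu>_def)
  then have sum_I: "(\<Sum>i\<in>I. \<mu> i) = (\<Sum>i\<le>k. \<mu> i)" "(\<Sum>i\<in>I. \<mu> i *\<^sub>R ind_perm \<pi> i) = (\<Sum>i\<le>k. \<mu> i *\<^sub>R ind_perm \<pi> i)"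
    by (auto simp: I_def intro: sum.mono_neutral_left)
  have "x $ \<pi> p = (\<Sum>i\<le>k. \<mu> i *\<^sub>R ind_perm \<pi> i) $ \<pi> p" if p: "1 \<le> p" "p \<le> k" for p
  proof -
    have "(\<Sum>i\<le>k. \<mu> i *\<^sub>R ind_perm \<pi> i) $ \<pi> p = (\<Sum>i\<le>k. if p \<le> i then \<mu> i else 0)"
      using perm p by (simp add: sum_component ind_perm_nth k_def if_distrib cong: if_cong)
    also have "\<dots> = (\<Sum>i = p..k. \<mu> i)" by (simp add: sum.If_cases atLeastAtMost_def Int_commute atLeast_def)
    also have "\<dots> = f p" using sum_Suc_diff[of p k "\<lambda>i. - f i"] p fk by (simp add: \<mu>_def)
    finally show ?thesis using x p by simp
  qed
  then have "x = (\<Sum>i\<in>I. \<mu> i *\<^sub>R ind_perm \<pi> i)"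
    using sum_I(2) by (metis vec_eq_iff is_perm_surj[OF perm] k_def)
  also have "\<dots> \<in> convex hull (ind_perm \<pi> ` I)"
  proof (rule convex_sum)
    show "(\<Sum>i\<in>I. \<mu> i) = 1" using sum_I(1) sum_telescope[of f k] f0 fk by (simp add: \<mu>_def)
    show "0 \<le> \<mu> i" if "i \<in> I" for i using antitone that by (simp add: I_def \<mu>_def)
  qed (auto simp: I_def hull_inc)
  finally show ?thesis by (simp add: I_def)
qed

lemma dinf_convex_hull_ind_perm_face_le:
  fixes \<pi> :: "nat \<Rightarrow> 'k::finite"
  defines "k \<equiv> CARD('k)" and "d \<equiv> 1 / (2 * real CARD('k))"
  assumes perm: "is_perm \<pi>" and "i0 \<le> k" and v: "\<forall>p\<in>{1..k}. v $ \<pi> p = 1 - (2 * real p - 1) * d"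
  shows "dinf (convex hull (ind_perm \<pi> ` ({..k} - {i0}))) v \<le> ereal d"
proof -
  define f where "f p = 1 - 2 * d * real (if p \<le> i0 then p else p - 1)" for p
  obtain x :: "real^'k" where x: "\<forall>p\<in>{1..k}. x $ \<pi> p = f p"
    using is_perm_coordinates_exist[OF perm] unfolding k_def by blast
  have d: "2 * d * real k = 1" "0 < d" by (simp_all add: d_def k_def)
  then have "x \<in> convex hull (ind_perm \<pi> ` ({..CARD('k)} - {i0}))"
    using \<open>i0 \<le> k\<close> by (intro staircase_mem_convex_hull_ind_perm[OF perm _ _ _ _ _ x[unfolded k_def]])
      (auto simp: f_def k_def)
  moreover have "\<bar>x $ j - v $ j\<bar> \<le> d" for j
  proof -
    obtain p where p: "1 \<le> p" "p \<le> k" "\<pi> p = j" using is_perm_surj[OF perm] unfolding k_def .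
    then have "x $ j = f p" "v $ j = 1 - (2 * real p - 1) * d" using x v by auto
    then have "x $ j - v $ j = (if p \<le> i0 then - d else d)"
      using p(1) by (auto simp: f_def algebra_simps of_nat_diff)
    then show ?thesis using d(2) by simp
  qed
  ultimately show ?thesis unfolding k_def by (blast intro: dinf_le_ereal)
qed

lemma psi_hat_empty_if_large:
  assumes "1 / (2 * real CARD('k)) < \<epsilon>"
  shows "\<exists>u :: real^'k::finite. psi_hat \<epsilon> u = {}"
proof -
  define k where "k = CARD('k)"
  define d where "d = 1 / (2 * real k)"
  obtain \<pi> :: "nat \<Rightarrow> 'k" where perm: "is_perm \<pi>" using is_perm_exists by blast
  obtain v :: "real^'k" where v: "\<forall>p\<in>{1..k}. v $ \<pi> p = 1 - (2 * real p - 1) * d"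
    using is_perm_coordinates_exist[OF perm, of "\<lambda>p. 1 - (2 * real p - 1) * d"] unfolding k_def by blast
  define face where "face i0 = ind_perm \<pi> ` ({..k} - {i0})" for i0
  have "boxed v = v"
  proof (rule boxed_eq_self, rule allI)
    fix j
    obtain p where "1 \<le> p" "p \<le> k" "\<pi> p = j" using is_perm_surj[OF perm] unfolding k_def .
    moreover have "(2 * real p - 1) * d \<le> 1" if "p \<le> k" for p
      using that by (simp add: d_def k_def field_simps)
    ultimately show "\<bar>v $ j\<bar> \<le> 1" using v by (auto simp: d_def)
  qed
  have "psi_hat \<epsilon> v \<subseteq> face i0" if "i0 \<le> k" for i0
  proof -
    have "face i0 \<subseteq> Vpy \<pi> 1" by (auto simp: face_def Vpy_def k_def)
    moreover have "(1 :: real^'k) \<in> signvecs" by (simp add: signvecs_def)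
    ultimately have "face i0 \<in> Vface" using perm by (auto simp: mem_Vface_iff)
    moreover have "dinf (convex hull (face i0)) (boxed v) < ereal \<epsilon>"
      using dinf_convex_hull_ind_perm_face_le[OF perm, of i0 v] that v assms \<open>boxed v = v\<close>
      by (auto simp: face_def k_def d_def intro: le_less_trans)
    ultimately show ?thesis by (auto simp: mem_psi_hat_iff)
  qed
  moreover have "(\<Inter>i0\<le>k. face i0) = {}"
  proof (rule ccontr)
    assume "(\<Inter>i0\<le>k. face i0) \<noteq> {}"
    then obtain w where w: "\<And>i0. i0 \<le> k \<Longrightarrow> w \<in> face i0" by blast
    obtain i where i: "i \<le> k" "w = ind_perm \<pi> i" using w[of 0] by (auto simp: face_def)
    obtain i' where "i' \<le> k" "i' \<noteq> i" "w = ind_perm \<pi> i'" using w[OF i(1)] by (auto simp: face_def)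
    then show False using i inj_onD[OF ind_perm_inj_on[OF perm]] by (auto simp: k_def)
  qed
  ultimately have "psi_hat \<epsilon> v = {}" by blast
  then show ?thesis by blast
qed

theorem lemma8:
  fixes \<epsilon> :: real
  assumes "\<epsilon> > 0"
  shows "(\<forall>u :: real^'k::finite. psi_hat \<epsilon> u \<noteq> {}) \<longleftrightarrow> \<epsilon> \<le> 1 / (2 * real CARD('k))"
  using psi_hat_nonempty[OF assms] psi_hat_empty_if_large by (meson not_le)

end
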